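(* Let $d\ge 1$, $p\ge 1$, $\lambda>0$, and let $\mathbf{x}=(x_1,\dots,x_n)$ and $\mathbf{x}'=(x'_1,\dots,x'_{n'})$ be two time series with values in $\mathbb{R}^d$, with $p<n$ and $p<n'$. Set $N=n+n'-2p$, and define $\mathbf{X}=[X\;X']\in\mathbb{R}^{pd\times N}$, $\mathbf{Y}=[Y\;Y']\in\mathbb{R}^{d\times N}$ and the $N\times N$ diagonal matrix $$\Delta=\operatorname{diag}\Big(\underbrace{\tfrac{1}{2(n-p)},\dots,\tfrac{1}{2(n-p)}}_{n-p\text{ times}},\underbrace{\tfrac{1}{2(n'-p)},\dots,\tfrac{1}{2(n'-p)}}_{n'-p\text{ times}}\Big),$$ where $X,Y,X',Y'$ are as described in the context. Define the autoregressive kernel of order $p$ and degrees of freedom $\lambda$ by $$k(\mathbf{x},\mathbf{x}')=\frac{1}{|\mathbf{X}\Delta\mathbf{X}^T+I_{pd}|^{\frac d2}\,\big|\mathbf{Y}\big(\Delta-\Delta\mathbf{X}^T(\mathbf{X}\Delta\mathbf{X}^T+I_{pd})^{-1}\mathbf{X}\Delta\big)\mathbf{Y}^T+I_d\big|^{\frac{1+\lambda}{2}}}.$$ Let $\alpha=\frac{1+\lambda}{d}$. Then $$k(\mathbf{x},\mathbf{x}')=\Big(|\mathbf{X}^T\mathbf{X}\Delta+I_N|^{1-\alpha}\,|\mathbf{X}^T\mathbf{X}\Delta+\mathbf{Y}^T\mathbf{Y}\Delta+I_N|^{\alpha}\Big)^{-\frac d2}.$$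
   Context: $|M|$ denotes the determinant of a square matrix $M$ and $I_m$ the $m\times m$ identity. For a time series $\mathbf{x}=(x_1,\dots,x_n)$ in $\mathbb{R}^d$ with $n>p$: $X\in\mathbb{R}^{pd\times(n-p)}$ is the matrix whose $i$-th column ($i=1,\dots,n-p$) is the stacked vector $(x_i;x_{i+1};\dots;x_{i+p-1})\in\mathbb{R}^{pd}$, and $Y\in\mathbb{R}^{d\times(n-p)}$ is the matrix whose $i$-th column is $x_{p+i}$, i.e. $Y=[x_{p+1},\dots,x_n]$. $X',Y'$ are defined in the same way from $\mathbf{x}'$ (with $n'-p$ columns). *)

theory Defs
  imports "Jordan_Normal_Form.Gauss_Jordan_Elimination" "Jordan_Normal_Form.Determinant"
begin

(* A time series x = (x_1,...,x_n) in R^d is a function nat => real vec, indexed from 1,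
   with dim_vec (x i) = d for 1 <= i <= n. *)

(* X in R^{pd x (n-p)}: column i (1-based, stored at 0-based column c = i-1) is the stacked
   vector (x_i; x_{i+1}; ...; x_{i+p-1}); row r is component (r mod d) of x_{i + r div d}. *)
definition lag_mat :: "nat \<Rightarrow> nat \<Rightarrow> nat \<Rightarrow> (nat \<Rightarrow> real vec) \<Rightarrow> real mat" where
  "lag_mat d p n x = mat (p * d) (n - p) (\<lambda>(r, c). x (c + 1 + r div d) $ (r mod d))"

definition resp_mat :: "nat \<Rightarrow> nat \<Rightarrow> nat \<Rightarrow> (nat \<Rightarrow> real vec) \<Rightarrow> real mat" where
  "resp_mat d p n x = mat d (n - p) (\<lambda>(r, c). x (p + 1 + c) $ r)"

definition hcat :: "real mat \<Rightarrow> real mat \<Rightarrow> real mat" where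
  "hcat A B = mat (dim_row A) (dim_col A + dim_col B)
     (\<lambda>(r, c). if c < dim_col A then A $$ (r, c) else B $$ (r, c - dim_col A))"

definition Delta_mat :: "nat \<Rightarrow> nat \<Rightarrow> nat \<Rightarrow> real mat" where
  "Delta_mat p n n' = mat_diag (n + n' - 2 * p)
     (\<lambda>j. if j < n - p then 1 / (2 * real (n - p)) else 1 / (2 * real (n' - p)))"

definition minv :: "real mat \<Rightarrow> real mat" where
  "minv A = (SOME B. B \<in> carrier_mat (dim_row A) (dim_row A) \<and>
                     A * B = 1\<^sub>m (dim_row A) \<and> B * A = 1\<^sub>m (dim_row A))"

definition ar_kernel :: "nat \<Rightarrow> nat \<Rightarrow> real \<Rightarrow> nat \<Rightarrow> (nat \<Rightarrow> real vec) \<Rightarrow> nat \<Rightarrow> (nat \<Rightarrow> real vec) \<Rightarrow> real" where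
  "ar_kernel d p lam n x n' x' =
    (let XX = hcat (lag_mat d p n x) (lag_mat d p n' x');
         YY = hcat (resp_mat d p n x) (resp_mat d p n' x');
         D = Delta_mat p n n';
         A = XX * D * transpose_mat XX + 1\<^sub>m (p * d)
     in 1 / (det A powr (real d / 2) *
             det (YY * (D - D * transpose_mat XX * minv A * XX * D) * transpose_mat YY + 1\<^sub>m d)
               powr ((1 + lam) / 2)))"

end

theory Submission
  imports Defs
begin

text \<open>
  Sylvester's identity \<open>det (U V + I) = det (V U + I)\<close> moves the first determinant from size
  \<open>pd\<close> to size \<open>N\<close>: \<open>|\<^bold>X\<Delta>\<^bold>X\<^sup>T + I| = |\<^bold>X\<^sup>T\<^bold>X\<Delta> + I|\<close>. The push-through identity shows that the
  Schur complement \<open>M = \<Delta> - \<Delta>\<^bold>X\<^sup>T(\<^bold>X\<Delta>\<^bold>X\<^sup>T + I)\<^sup>-\<^sup>1\<^bold>X\<Delta>\<close> satisfies \<open>M (\<^bold>X\<^sup>T\<^bold>X\<Delta> + I) = \<Delta>\<close>; together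
  with Sylvester's identity for the second determinant this gives
  \<open>|\<^bold>X\<Delta>\<^bold>X\<^sup>T + I| \<cdot> |\<^bold>YM\<^bold>Y\<^sup>T + I| = |\<^bold>X\<^sup>T\<^bold>X\<Delta> + \<^bold>Y\<^sup>T\<^bold>Y\<Delta> + I|\<close>. Both determinants of size \<open>N\<close> are
  positive, since \<open>W\<Delta> + I\<close> is nonsingular for every positive semidefinite \<open>W\<close> and positive
  diagonal \<open>\<Delta>\<close>, so the kernel formula follows by arithmetic with real powers.
\<close>

lemma det_mult_add_one_commute:
  fixes U V :: "'a :: idom mat"
  assumes U: "U \<in> carrier_mat m n" and V: "V \<in> carrier_mat n m"
  shows "det (U * V + 1\<^sub>m m) = det (V * U + 1\<^sub>m n)"
proof -
  define M where "M = four_block_mat (1\<^sub>m m) (-U) V (1\<^sub>m n)"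
  have UV: "U * V \<in> carrier_mat m m" and VU: "V * U \<in> carrier_mat n n"
    using U V by auto
  have "four_block_mat (1\<^sub>m m) (0\<^sub>m m n) V (1\<^sub>m n) * four_block_mat (1\<^sub>m m) (-U) (0\<^sub>m n m) (V * U + 1\<^sub>m n)
      = M"
    unfolding M_def using U V VU
    by (subst mult_four_block_mat[of _ m m _ n _ n]) (auto intro!: arg_cong4[where f = four_block_mat])
  then have "det M = det (V * U + 1\<^sub>m n)"
    using U V VU
    by (auto simp: det_mult[of _ "m + n"] det_four_block_mat_upper_right_zero[of _ m _ n]
        det_four_block_mat_lower_left_zero[of _ m _ n])
  moreover have "four_block_mat (1\<^sub>m m) (-U) (0\<^sub>m n m) (1\<^sub>m n) * four_block_mat (U * V + 1\<^sub>m m) (0\<^sub>m m n) V (1\<^sub>m n)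
      = M"
    unfolding M_def using U V UV
    by (subst mult_four_block_mat[of _ m m _ n _ n]) (auto intro!: arg_cong4[where f = four_block_mat])
  then have "det M = det (U * V + 1\<^sub>m m)"
    using U V UV
    by (auto simp: det_mult[of _ "m + n"] det_four_block_mat_upper_right_zero[of _ m _ n]
        det_four_block_mat_lower_left_zero[of _ m _ n])
  ultimately show ?thesis by simp
qed

text \<open>
  With \<open>R = X\<^sup>T\<close>, \<open>U = X D\<close> and \<open>B = (X D X\<^sup>T + I)\<^sup>-\<^sup>1\<close> this identifies the Schur complement
  \<open>D - D X\<^sup>T B X D\<close> with \<open>D (X\<^sup>T X D + I)\<^sup>-\<^sup>1\<close>.
\<close>

lemma complement_mult_add_one:
  fixes R U E B :: "'a :: ring_1 mat"
  assumes R: "R \<in> carrier_mat n m" and U: "U \<in> carrier_mat m n"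
    and E: "E \<in> carrier_mat k n" and B: "B \<in> carrier_mat m m"
    and B_inv: "B * (U * R + 1\<^sub>m m) = 1\<^sub>m m"
  shows "(E - E * R * B * U) * (R * U + 1\<^sub>m n) = E"
proof -
  have ER: "E * R \<in> carrier_mat k m" and ERB: "E * R * B \<in> carrier_mat k m"
    and RU1: "R * U + 1\<^sub>m n \<in> carrier_mat n n" and UR1: "U * R + 1\<^sub>m m \<in> carrier_mat m m"
    using E R B U by auto
  have "E * R * B * U * (R * U + 1\<^sub>m n) = E * R * B * (U * (R * U + 1\<^sub>m n))"
    by (rule assoc_mult_mat[OF ERB U RU1])
  also have "U * (R * U + 1\<^sub>m n) = (U * R + 1\<^sub>m m) * U"
    using R U by (simp add: mult_add_distrib_mat[OF U _ one_carrier_mat]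
        add_mult_distrib_mat[OF _ one_carrier_mat U])
  also have "E * R * B * ((U * R + 1\<^sub>m m) * U) = E * R * (B * (U * R + 1\<^sub>m m)) * U"
    using assoc_mult_mat[OF ERB UR1 U] assoc_mult_mat[OF ER B UR1] by simp
  also have "\<dots> = E * R * U" using B_inv right_mult_one_mat[OF ER] by simp
  finally have ERBUC: "E * R * B * U * (R * U + 1\<^sub>m n) = E * R * U" .
  have "(E - E * R * B * U) * (R * U + 1\<^sub>m n) = E * (R * U + 1\<^sub>m n) - E * R * B * U * (R * U + 1\<^sub>m n)"
    using ERB U by (intro minus_mult_distrib_mat[OF E _ RU1]) auto
  also have "\<dots> = (E * R * U + E) - E * R * U"
    unfolding ERBUC using E R U by (simp add: mult_add_distrib_mat[OF E _ one_carrier_mat])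
  also have "\<dots> = E" using E ER U by (intro eq_matI) auto
  finally show ?thesis .
qed

lemma det_weighted_gram_add_one:
  fixes X D :: "'a :: idom mat"
  assumes X: "X \<in> carrier_mat m N" and D: "D \<in> carrier_mat N N"
  shows "det (X * D * transpose_mat X + 1\<^sub>m m) = det (transpose_mat X * X * D + 1\<^sub>m N)"
  using det_mult_add_one_commute[of "X * D" m N "transpose_mat X"] X D by simp

lemma det_add_one_mult_det_schur_complement:
  fixes X Y D B :: "'a :: idom mat"
  assumes X: "X \<in> carrier_mat m N" and Y: "Y \<in> carrier_mat k N" and D: "D \<in> carrier_mat N N"
    and B: "B \<in> carrier_mat m m" and B_inv: "B * (X * D * transpose_mat X + 1\<^sub>m m) = 1\<^sub>m m"
  shows "det (X * D * transpose_mat X + 1\<^sub>m m) *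
           det (Y * (D - D * transpose_mat X * B * X * D) * transpose_mat Y + 1\<^sub>m k)
         = det (transpose_mat X * X * D + transpose_mat Y * Y * D + 1\<^sub>m N)"
proof -
  define Xt Yt where "Xt = transpose_mat X" and "Yt = transpose_mat Y"
  define M where "M = D - D * Xt * B * X * D"
  define C where "C = Xt * X * D + 1\<^sub>m N"
  have Xt: "Xt \<in> carrier_mat N m" and Yt: "Yt \<in> carrier_mat N k"
    and M: "M \<in> carrier_mat N N" and C: "C \<in> carrier_mat N N"
    using X Y D B unfolding Xt_def Yt_def M_def C_def by (auto simp: minus_carrier_mat)
  have XD: "X * D \<in> carrier_mat m N" and YtY: "Yt * Y \<in> carrier_mat N N" using X D Y Yt by auto
  have "D * Xt * B \<in> carrier_mat N m" using D Xt B by simp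
  then have "M * C = (D - D * Xt * B * (X * D)) * (Xt * (X * D) + 1\<^sub>m N)"
    unfolding M_def C_def using Xt X D by (simp only: assoc_mult_mat)
  also have "\<dots> = D"
    using B_inv X D Xt by (intro complement_mult_add_one[OF Xt XD D B]) (simp add: Xt_def)
  finally have MC: "M * C = D" .
  have "det (Y * M * Yt + 1\<^sub>m k) = det (Yt * Y * M + 1\<^sub>m N)"
    using det_mult_add_one_commute[of "Y * M" k N Yt] Y M Yt by simp
  moreover have "(Yt * Y * M + 1\<^sub>m N) * C = Xt * X * D + Yt * Y * D + 1\<^sub>m N"
  proof -
    have "(Yt * Y * M + 1\<^sub>m N) * C = Yt * Y * (M * C) + C"
      using YtY M C by (simp add: add_mult_distrib_mat[OF _ one_carrier_mat C])
    also have "\<dots> = Yt * Y * D + C" unfolding MC ..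
    also have "\<dots> = Xt * X * D + Yt * Y * D + 1\<^sub>m N"
      unfolding C_def using Xt X Yt Y D by (intro eq_matI) auto
    finally show ?thesis .
  qed
  ultimately have "det C * det (Y * M * Yt + 1\<^sub>m k) = det (Xt * X * D + Yt * Y * D + 1\<^sub>m N)"
    using det_mult[OF _ C, of "Yt * Y * M + 1\<^sub>m N"] YtY M by (simp add: mult.commute)
  then show ?thesis
    using det_weighted_gram_add_one[OF X D] unfolding M_def C_def Xt_def Yt_def by simp
qed

lemma continuous_on_det:
  fixes F :: "'b :: topological_space \<Rightarrow> 'a :: real_normed_field mat"
  assumes F: "\<And>t. t \<in> S \<Longrightarrow> F t \<in> carrier_mat n n"
    and entries: "\<And>i j. i < n \<Longrightarrow> j < n \<Longrightarrow> continuous_on S (\<lambda>t. F t $$ (i, j))"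
  shows "continuous_on S (\<lambda>t. det (F t))"
proof -
  have "continuous_on S (\<lambda>t. \<Sum>p \<in> {p. p permutes {0..<n}}. signof p * (\<Prod>i = 0..<n. F t $$ (i, p i)))"
    by (intro continuous_intros entries) (auto dest: permutes_in_image)
  then show ?thesis
    by (rule continuous_on_cong[THEN iffD1, rotated 2]) (simp_all add: det_def'[OF F])
qed

lemma scalar_prod_gram_nonneg:
  fixes X :: "real mat"
  assumes X: "X \<in> carrier_mat m N" and u: "u \<in> carrier_vec N"
  shows "u \<bullet> (transpose_mat X * X *\<^sub>v u) \<ge> 0"
proof -
  have "u \<bullet> (transpose_mat X * X *\<^sub>v u) = (transpose_mat X *\<^sub>v (X *\<^sub>v u)) \<bullet> u"
    using X u by (simp add: comm_scalar_prod[of _ N])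
  also have "\<dots> = (X *\<^sub>v u) \<bullet> (X *\<^sub>v u)"
    using X u by (intro transpose_vec_mult_scalar) auto
  also have "\<dots> \<ge> 0" unfolding scalar_prod_def by (intro sum_nonneg) auto
  finally show ?thesis .
qed

lemma mat_diag_mult_vec:
  assumes "v \<in> carrier_vec n"
  shows "mat_diag n f *\<^sub>v v = vec n (\<lambda>i. f i * v $ i)"
proof (rule eq_vecI)
  fix i assume "i < dim_vec (vec n (\<lambda>i. f i * v $ i))"
  then show "(mat_diag n f *\<^sub>v v) $ i = vec n (\<lambda>i. f i * v $ i) $ i"
    using assms by (simp add: mat_diag_def scalar_prod_def sum.remove[of _ i])
qed (simp add: mat_diag_def)

lemma det_psd_mult_diag_add_one_neq_zero:
  fixes W :: "real mat"
  assumes W: "W \<in> carrier_mat N N"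
    and psd: "\<And>u. u \<in> carrier_vec N \<Longrightarrow> u \<bullet> (W *\<^sub>v u) \<ge> 0"
    and f: "\<And>j. j < N \<Longrightarrow> f j > 0"
  shows "det (W * mat_diag N f + 1\<^sub>m N) \<noteq> 0"
proof
  \<comment> \<open>A kernel vector \<open>v\<close> gives \<open>w = diag f v\<close> with \<open>W w = -v\<close>, so \<open>0 \<le> w \<bullet> W w = -\<Sum>i. f i v\<^sub>i\<^sup>2\<close>.\<close>
  assume "det (W * mat_diag N f + 1\<^sub>m N) = 0"
  then obtain v where v: "v \<in> carrier_vec N" "v \<noteq> 0\<^sub>v N"
    and kernel: "(W * mat_diag N f + 1\<^sub>m N) *\<^sub>v v = 0\<^sub>v N"
    using det_0_iff_vec_prod_zero[of "W * mat_diag N f + 1\<^sub>m N" N] W by auto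
  define w where "w = vec N (\<lambda>i. f i * v $ i)"
  have w: "w \<in> carrier_vec N" unfolding w_def by simp
  have "(W * mat_diag N f + 1\<^sub>m N) *\<^sub>v v = W *\<^sub>v w + v"
    using W v by (simp add: add_mult_distrib_mat_vec[of _ N N] assoc_mult_mat_vec[OF W mat_diag_dim v(1)]
        mat_diag_mult_vec w_def)
  with kernel have kernel_w: "W *\<^sub>v w + v = 0\<^sub>v N" by simp
  have "(W *\<^sub>v w + v) $ i = 0" if "i < N" for i
    using that unfolding kernel_w by simp
  then have Ww: "(W *\<^sub>v w) $ i = - v $ i" if "i < N" for i
    using that v by (simp add: eq_neg_iff_add_eq_0)
  have "0 \<le> w \<bullet> (W *\<^sub>v w)" using psd[OF w] .
  also have "\<dots> = - (\<Sum>i = 0..<N. f i * (v $ i)\<^sup>2)"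
    using W v w Ww unfolding scalar_prod_def
    by (simp add: w_def power2_eq_square sum_negf[symmetric] mult.assoc)
  finally have "(\<Sum>i = 0..<N. f i * (v $ i)\<^sup>2) \<le> 0" by simp
  moreover have terms_nonneg: "\<And>i. i \<in> {0..<N} \<Longrightarrow> 0 \<le> f i * (v $ i)\<^sup>2"
    using f by (simp add: less_imp_le)
  ultimately have "\<forall>i \<in> {0..<N}. f i * (v $ i)\<^sup>2 = 0"
    using sum_nonneg[of "{0..<N}" "\<lambda>i. f i * (v $ i)\<^sup>2", OF terms_nonneg]
      sum_nonneg_eq_0_iff[of "{0..<N}" "\<lambda>i. f i * (v $ i)\<^sup>2", OF _ terms_nonneg]
    by (simp del: mult_eq_0_iff)
  then have "v $ i = 0" if "i < N" for i
    using f[OF that] that by (auto dest: bspec[where x = i])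
  then have "v = 0\<^sub>v N" using v by (intro eq_vecI) auto
  with v show False by simp
qed

lemma det_psd_mult_diag_add_one_pos:
  fixes W :: "real mat"
  assumes W: "W \<in> carrier_mat N N"
    and psd: "\<And>u. u \<in> carrier_vec N \<Longrightarrow> u \<bullet> (W *\<^sub>v u) \<ge> 0"
    and f: "\<And>j. j < N \<Longrightarrow> f j > 0"
  shows "det (W * mat_diag N f + 1\<^sub>m N) > 0"
proof -
  define K where "K = W * mat_diag N f"
  \<comment> \<open>\<open>g\<close> is continuous, \<open>g 0 = 1\<close> and \<open>g\<close> has no zero on \<open>[0, \<infinity>)\<close> since \<open>t W\<close> is semidefinite.\<close>
  define g where "g t = det (t \<cdot>\<^sub>m K + 1\<^sub>m N)" for t
  have K: "K \<in> carrier_mat N N" unfolding K_def using W by simp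
  have g_nonzero: "g t \<noteq> 0" if "t \<ge> 0" for t
  proof -
    have "u \<bullet> (t \<cdot>\<^sub>m W *\<^sub>v u) \<ge> 0" if u: "u \<in> carrier_vec N" for u
    proof -
      have "t \<cdot>\<^sub>m W *\<^sub>v u = t \<cdot>\<^sub>v (W *\<^sub>v u)" using W u by (intro eq_vecI) auto
      then show ?thesis using psd[OF u] \<open>t \<ge> 0\<close> u W by simp
    qed
    then have "det (t \<cdot>\<^sub>m W * mat_diag N f + 1\<^sub>m N) \<noteq> 0"
      using W by (intro det_psd_mult_diag_add_one_neq_zero[OF _ _ f]) auto
    then show ?thesis unfolding g_def K_def by (simp add: mult_smult_assoc_mat[OF W mat_diag_dim])
  qed
  have "continuous_on {0..1} g"
    unfolding g_def using K by (intro continuous_on_det[of _ _ N]) (auto intro!: continuous_intros)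
  moreover have "0 \<cdot>\<^sub>m K + 1\<^sub>m N = 1\<^sub>m N" using K by (intro eq_matI) auto
  then have "g 0 = 1" unfolding g_def by simp
  moreover have "1 \<cdot>\<^sub>m K = K" using K by (intro eq_matI) auto
  then have g1: "g 1 = det (K + 1\<^sub>m N)" unfolding g_def by simp
  ultimately have "\<not> g 1 \<le> 0"
    using IVT2'[of g 1 0 0] g_nonzero by auto
  then show ?thesis unfolding g1 K_def by simp
qed

lemma one_divide_powr_mult_powr_divide:
  fixes a b c e :: real
  assumes a: "a > 0" and b: "b > 0" and e: "e \<noteq> 0"
  shows "1 / (a powr (e / 2) * (b / a) powr (c / 2))
       = (a powr (1 - c / e) * b powr (c / e)) powr (- e / 2)"
proof -
  have "(1 - c / e) * (- e / 2) = c / 2 - e / 2" and "c / e * (- e / 2) = - (c / 2)"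
    using e by (simp_all add: field_simps)
  then have "(a powr (1 - c / e) * b powr (c / e)) powr (- e / 2)
      = a powr (c / 2 - e / 2) * b powr (- (c / 2))"
    using a b by (simp add: powr_mult powr_powr)
  also have "\<dots> = 1 / (a powr (e / 2) * (b / a) powr (c / 2))"
    using a b by (simp add: powr_diff powr_minus_divide powr_divide)
  finally show ?thesis ..
qed

lemma minv_mult_left:
  assumes A: "A \<in> carrier_mat m m" and det: "det A \<noteq> 0"
  shows "minv A \<in> carrier_mat m m" and "minv A * A = 1\<^sub>m m"
proof -
  obtain B where "B \<in> carrier_mat m m" "A * B = 1\<^sub>m m" "B * A = 1\<^sub>m m"
    using det_non_zero_imp_unit[OF A det, of "()"] unfolding Units_def ring_mat_def by auto
  then have "\<exists>B. B \<in> carrier_mat (dim_row A) (dim_row A) \<and> A * B = 1\<^sub>m (dim_row A) \<and> B * A = 1\<^sub>m (dim_row A)"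
    using A by blast
  from someI_ex[OF this] show "minv A \<in> carrier_mat m m" and "minv A * A = 1\<^sub>m m"
    using A unfolding minv_def by auto
qed

lemma det_gram_sum_mult_diag_add_one_pos:
  fixes X Y :: "real mat"
  assumes X: "X \<in> carrier_mat m N" and Y: "Y \<in> carrier_mat k N"
    and f: "\<And>j. j < N \<Longrightarrow> f j > 0"
  shows "det (transpose_mat X * X * mat_diag N f + transpose_mat Y * Y * mat_diag N f + 1\<^sub>m N) > 0"
proof -
  define W where "W = transpose_mat X * X + transpose_mat Y * Y"
  have W: "W \<in> carrier_mat N N" unfolding W_def using X Y by simp
  have psd: "u \<bullet> (W *\<^sub>v u) \<ge> 0" if u: "u \<in> carrier_vec N" for u
  proof -
    have "u \<bullet> (W *\<^sub>v u) = u \<bullet> (transpose_mat X * X *\<^sub>v u) + u \<bullet> (transpose_mat Y * Y *\<^sub>v u)"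
      unfolding W_def using X Y u
      by (simp add: add_mult_distrib_mat_vec[of _ N N] scalar_prod_add_distrib[of _ N])
    then show ?thesis using scalar_prod_gram_nonneg[OF X u] scalar_prod_gram_nonneg[OF Y u] by simp
  qed
  have "W * mat_diag N f = transpose_mat X * X * mat_diag N f + transpose_mat Y * Y * mat_diag N f"
    unfolding W_def using X Y by (intro add_mult_distrib_mat[of _ N N _ _ N]) auto
  with det_psd_mult_diag_add_one_pos[of W N f, OF W psd f] show ?thesis by simp
qed

lemma inverse_det_powr_schur_complement:
  fixes X Y :: "real mat" and c e :: real
  assumes X: "X \<in> carrier_mat m N" and Y: "Y \<in> carrier_mat k N"
    and f: "\<And>j. j < N \<Longrightarrow> f j > 0" and e: "e \<noteq> 0"
  defines "D \<equiv> mat_diag N f"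
  defines "A \<equiv> X * D * transpose_mat X + 1\<^sub>m m"
  shows "1 / (det A powr (e / 2) *
              det (Y * (D - D * transpose_mat X * minv A * X * D) * transpose_mat Y + 1\<^sub>m k) powr (c / 2))
       = (det (transpose_mat X * X * D + 1\<^sub>m N) powr (1 - c / e) *
          det (transpose_mat X * X * D + transpose_mat Y * Y * D + 1\<^sub>m N) powr (c / e)) powr (- e / 2)"
proof -
  define a where "a = det (transpose_mat X * X * D + 1\<^sub>m N)"
  define b where "b = det (transpose_mat X * X * D + transpose_mat Y * Y * D + 1\<^sub>m N)"
  define S where "S = Y * (D - D * transpose_mat X * minv A * X * D) * transpose_mat Y + 1\<^sub>m k"
  have D: "D \<in> carrier_mat N N" unfolding D_def by simp
  have a: "a > 0" unfolding a_def D_def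
    using X scalar_prod_gram_nonneg[OF X] by (intro det_psd_mult_diag_add_one_pos[OF _ _ f]) auto
  have b: "b > 0" unfolding b_def D_def by (rule det_gram_sum_mult_diag_add_one_pos[OF X Y f])
  have det_A: "det A = a" unfolding A_def a_def by (rule det_weighted_gram_add_one[OF X D])
  have A: "A \<in> carrier_mat m m" unfolding A_def using X D by simp
  have B: "minv A \<in> carrier_mat m m" "minv A * A = 1\<^sub>m m"
    using minv_mult_left[OF A] a det_A by auto
  have "det A * det S = b"
  proof -
    have "minv A * (X * D * transpose_mat X + 1\<^sub>m m) = 1\<^sub>m m"
      using B(2) by (simp only: A_def)
    from det_add_one_mult_det_schur_complement[OF X Y D B(1) this]
    show ?thesis unfolding A_def[symmetric] S_def b_def .
  qed
  then have "det S = b / a" using a det_A by (simp add: field_simps)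
  then have "1 / (det A powr (e / 2) * det S powr (c / 2)) = 1 / (a powr (e / 2) * (b / a) powr (c / 2))"
    unfolding det_A by simp
  also have "\<dots> = (a powr (1 - c / e) * b powr (c / e)) powr (- e / 2)"
    by (rule one_divide_powr_mult_powr_divide[OF a b e])
  finally show ?thesis unfolding S_def a_def b_def .
qed

theorem proposition1:
  fixes d p n n' :: nat and lam :: real and x x' :: "nat \<Rightarrow> real vec"
  assumes "d \<ge> 1" and "p \<ge> 1" and "lam > 0"
    and "p < n" and "p < n'"
    and "\<And>i. 1 \<le> i \<Longrightarrow> i \<le> n \<Longrightarrow> dim_vec (x i) = d"
    and "\<And>i. 1 \<le> i \<Longrightarrow> i \<le> n' \<Longrightarrow> dim_vec (x' i) = d"
  shows "let N = n + n' - 2 * p;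
             XX = hcat (lag_mat d p n x) (lag_mat d p n' x');
             YY = hcat (resp_mat d p n x) (resp_mat d p n' x');
             D = Delta_mat p n n';
             \<alpha> = (1 + lam) / real d
         in ar_kernel d p lam n x n' x' =
            (det (transpose_mat XX * XX * D + 1\<^sub>m N) powr (1 - \<alpha>) *
             det (transpose_mat XX * XX * D + transpose_mat YY * YY * D + 1\<^sub>m N) powr \<alpha>)
              powr (- real d / 2)"
proof -
  define N where "N = n + n' - 2 * p"
  define XX where "XX = hcat (lag_mat d p n x) (lag_mat d p n' x')"
  define YY where "YY = hcat (resp_mat d p n x) (resp_mat d p n' x')"
  have "(n - p) + (n' - p) = N" unfolding N_def using assms(4,5) by simp
  then have XX: "XX \<in> carrier_mat (p * d) N" and YY: "YY \<in> carrier_mat d N"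
    unfolding XX_def YY_def hcat_def lag_mat_def resp_mat_def carrier_mat_def by auto
  obtain f where D: "Delta_mat p n n' = mat_diag N f" and f: "\<And>j. j < N \<Longrightarrow> f j > 0"
    using assms(4,5) unfolding Delta_mat_def N_def by fastforce
  show ?thesis
    unfolding ar_kernel_def Let_def N_def[symmetric] XX_def[symmetric] YY_def[symmetric] D
    using assms(1) by (intro inverse_det_powr_schur_complement[OF XX YY f]) auto
qed

end
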